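(* For every even integer $n=2k>0$, the root scheme $$\big([(q,2),(p,2)]^{k},(q,1),(r,1)^{2k+1},(p,1)\big)$$ is realizable by polynomials of degree $n+1$. For every odd integer $n=2k+1>0$, the root scheme $$\big([(q,2),(p,2)]^{k},(q,2),(p,1),(r,1)^{2k+2},(p,1)\big)$$ is realizable by polynomials of degree $n+1$.
   Context: A root scheme is a finite sequence $((l_1,m_1),\dots,(l_k,m_k))$ with $l_i\in\{p,q,r\}$ and $m_i$ a positive integer. It is realizable by polynomials of degree $d$ if there exist real polynomials $P,Q$ such that $f=P-Q$ has degree $d$ and, listing the real roots of $P$, $Q$ and $f$ in increasing order as $\rho_1<\dots<\rho_k$, each $\rho_i$ is a root of exactly one of $P,Q,f$, with $l_i=p$ (resp. $q$, $r$) if $\rho_i$ is a root of $P$ (resp. $Q$, $f$), and $m_i$ is the multiplicity of $\rho_i$ as such a root. A sequence $T$ repeated $u$ times is written $T^u$ (empty if $u=0$), and $[\dots]$ denotes grouping. *)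

theory Defs
  imports "HOL-Computational_Algebra.Polynomial"
begin

datatype root_label = Lp | Lq | Lr

type_synonym root_scheme = "(root_label \<times> nat) list"

definition label_poly :: "real poly \<Rightarrow> real poly \<Rightarrow> root_label \<Rightarrow> real poly" where
  "label_poly P Q l = (case l of Lp \<Rightarrow> P | Lq \<Rightarrow> Q | Lr \<Rightarrow> P - Q)"

definition realizable :: "root_scheme \<Rightarrow> nat \<Rightarrow> bool" where
  "realizable S d \<longleftrightarrow> (\<exists>P Q :: real poly. degree (P - Q) = d \<and>
     (\<exists>rho :: real list. length rho = length S \<and> sorted_wrt (<) rho \<and>
        set rho = {x. poly P x = 0 \<or> poly Q x = 0 \<or> poly (P - Q) x = 0} \<and>
        (\<forall>i < length S.
           (poly P (rho ! i) = 0 \<longleftrightarrow> fst (S ! i) = Lp) \<and>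
           (poly Q (rho ! i) = 0 \<longleftrightarrow> fst (S ! i) = Lq) \<and>
           (poly (P - Q) (rho ! i) = 0 \<longleftrightarrow> fst (S ! i) = Lr) \<and>
           order (rho ! i) (label_poly P Q (fst (S ! i))) = snd (S ! i))))"

end

theory Submission
  imports Defs
begin

(* Both schemes are instances of one construction, with n = 2k and n = 2k+1.  Let
   W_0 = 1, W_1 = X and W_(n+2) = W_n (X + N^n)^2, and take P = K (b - X) W_n and
   Q = W_(n+1) with b = 2 N^(n-1).  Then the roots of P and Q are -N^(n-1) < ... < -N < -1,
   all double and alternately roots of Q and of P, followed by the simple roots 0 and b,
   and f = P - Q has degree n+1.  At x = N^m the ratio r_n = W_(n+1)(x) / W_n(x) satisfies
   r_(n+1) r_n = (x + N^n)^2, so up to a factor 4^n it equals N^n or N^(n-1) according to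
   the parity of n + m.  For K > 4^n and N >= 2 K 4^n this makes f alternate in sign along
   0 < 1 < N < ... < N^(n-1) < b, so f has n+1 simple roots, all in (0, b). *)

lemma order_linear_factor_power:
  fixes c :: "'a::idom"
  shows "order a ([:c, 1:] ^ k) = (if a = - c then k else 0)"
proof (cases "a = - c")
  case True
  then show ?thesis using order_power_n_n[of a k] by simp
next
  case False
  then show ?thesis by (auto intro!: order_0I simp: add_eq_0_iff)
qed

(* alt_poly N n = X^(n mod 2) * (product of (X + N^j)^2 over the j < n of the same parity as n) *)
fun alt_poly :: "real \<Rightarrow> nat \<Rightarrow> real poly" where
  "alt_poly N 0 = 1"
| "alt_poly N (Suc 0) = [:0, 1:]"
| "alt_poly N (Suc (Suc n)) = alt_poly N n * [:N ^ n, 1:] ^ 2"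

lemma lead_coeff_alt_poly [simp]: "lead_coeff (alt_poly N n) = 1"
  by (induction N n rule: alt_poly.induct) (simp_all add: lead_coeff_mult lead_coeff_power)

lemma alt_poly_nonzero [simp]: "alt_poly N n \<noteq> 0"
  using lead_coeff_alt_poly[of N n] by (metis leading_coeff_0_iff zero_neq_one)

lemma degree_alt_poly [simp]: "degree (alt_poly N n) = n"
  by (induction N n rule: alt_poly.induct) (simp_all add: degree_mult_eq degree_power_eq)

lemma poly_alt_poly_Suc_Suc:
  "poly (alt_poly N (Suc (Suc n))) x = poly (alt_poly N n) x * (x + N ^ n)\<^sup>2"
  by (simp add: add.commute)

lemma alt_poly_root_iff:
  "poly (alt_poly N n) x = 0 \<longleftrightarrow> (odd n \<and> x = 0) \<or> (\<exists>j<n. even (n + j) \<and> x = - (N ^ j))"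
proof (induction N n rule: alt_poly.induct)
  case (3 N n)
  have "(\<exists>j<Suc (Suc n). even (Suc (Suc n) + j) \<and> x = - (N ^ j))
        \<longleftrightarrow> (\<exists>j<n. even (n + j) \<and> x = - (N ^ j)) \<or> x = - (N ^ n)"
    by (auto simp: less_Suc_eq)
  with "3.IH" show ?case by (auto simp: add_eq_0_iff)
qed auto

lemma order_alt_poly_neg_power:
  assumes "1 < N"
  shows "order (- (N ^ m)) (alt_poly N n) = (if m < n \<and> even (n + m) then 2 else 0)"
  using assms
proof (induction N n rule: alt_poly.induct)
  case (3 N n)
  have "order (- (N ^ m)) (alt_poly N (Suc (Suc n)))
        = order (- (N ^ m)) (alt_poly N n) + order (- (N ^ m)) ([:N ^ n, 1:] ^ 2)"
    by (simp add: order_mult)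
  then show ?case
    using 3 by (auto simp: order_linear_factor_power less_Suc_eq)
qed (auto intro!: order_0I)

lemma order_alt_poly_0:
  assumes "N \<noteq> 0"
  shows "order 0 (alt_poly N n) = (if odd n then 1 else 0)"
  using assms
proof (induction N n rule: alt_poly.induct)
  case (2 N)
  show ?case using order_linear_factor_power[of 0 0 1] by simp
next
  case (3 N n)
  then show ?case by (simp add: order_mult order_linear_factor_power)
qed simp

lemma alt_poly_pos:
  assumes "0 < N" "0 \<le> x" "x = 0 \<Longrightarrow> even n"
  shows "0 < poly (alt_poly N n) x"
  using assms
proof (induction N n rule: alt_poly.induct)
  case (3 N n)
  then have "0 < x + N ^ n" by (simp add: add_nonneg_pos)
  with 3 show ?case by (simp add: poly_alt_poly_Suc_Suc)
qed (auto simp: le_less)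

lemma reciprocal_recurrence_bounds:
  fixes r e s :: "nat \<Rightarrow> real" and c :: real
  assumes init: "r 0 = e 0" and recurrence: "\<And>n. r (Suc n) * r n = s n"
    and s_lower: "\<And>n. e (Suc n) * e n \<le> s n" and s_upper: "\<And>n. s n \<le> c * (e (Suc n) * e n)"
    and e_pos: "\<And>n. 0 < e n" and c_ge_1: "1 \<le> c"
  shows "e n / c ^ n \<le> r n \<and> r n \<le> c ^ n * e n"
proof (induction n)
  case 0
  then show ?case using init by simp
next
  case (Suc n)
  have c_pos: "0 < c ^ n" using c_ge_1 by simp
  have r_pos: "0 < r n"
    using Suc.IH e_pos[of n] c_pos by (meson divide_pos_pos less_le_trans)
  have "0 < s n" using s_lower[of n] e_pos by (meson mult_pos_pos less_le_trans)
  then have rSuc_pos: "0 < r (Suc n)"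
    using recurrence[of n] r_pos by (metis zero_less_mult_pos2)
  have "e (Suc n) * e n \<le> r (Suc n) * r n" using recurrence s_lower by metis
  also have "\<dots> \<le> r (Suc n) * c ^ n * e n"
    using Suc.IH rSuc_pos by (simp add: mult.assoc mult_left_mono)
  finally have "e (Suc n) \<le> r (Suc n) * c ^ n"
    using e_pos[of n] by simp
  then have lower: "e (Suc n) / c ^ n \<le> r (Suc n)"
    using c_pos by (simp add: divide_le_eq)
  have "e n \<le> c ^ n * r n"
    using Suc.IH c_pos by (simp add: divide_le_eq mult.commute)
  then have "r (Suc n) * e n \<le> c ^ n * (r (Suc n) * r n)"
    using rSuc_pos by (metis mult.left_commute mult_left_mono less_le)
  also have "\<dots> \<le> c ^ n * (c * (e (Suc n) * e n))"
    using recurrence[of n] s_upper[of n] c_pos by simp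
  finally have "r (Suc n) * e n \<le> (c ^ Suc n * e (Suc n)) * e n"
    by (simp add: ac_simps)
  then have upper: "r (Suc n) \<le> c ^ Suc n * e (Suc n)"
    using mult_le_cancel_right_pos[OF e_pos[of n]] by blast
  have "e (Suc n) / c ^ Suc n \<le> e (Suc n) / c ^ n"
    using e_pos[of "Suc n"] c_pos c_ge_1 by (intro divide_left_mono) (auto intro: power_increasing)
  with lower upper show ?case by linarith
qed

lemma power_sum_between_max:
  fixes N :: real
  assumes "1 \<le> N"
  shows "N ^ max m k \<le> N ^ m + N ^ k" and "N ^ m + N ^ k \<le> 2 * N ^ max m k"
  using assms power_increasing[of m k N] power_increasing[of k m N]
  by (auto simp: max_def)

lemma alt_poly_ratio_bounds:
  fixes N :: real and m n :: nat
  assumes "1 \<le> N"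
  defines "e \<equiv> max m (if even (n + m) then n else n - 1)"
  shows "N ^ e / 4 ^ n \<le> poly (alt_poly N (Suc n)) (N ^ m) / poly (alt_poly N n) (N ^ m)"
    and "poly (alt_poly N (Suc n)) (N ^ m) / poly (alt_poly N n) (N ^ m) \<le> 4 ^ n * N ^ e"
proof -
  define x where "x = N ^ m"
  define W where "W k = poly (alt_poly N k) x" for k
  define \<epsilon> where "\<epsilon> k = max m (if even (k + m) then k else k - 1)" for k
  have W_pos: "0 < W k" for k
    unfolding W_def x_def using assms(1) by (intro alt_poly_pos) auto
  have step: "W (Suc (Suc k)) / W (Suc k) * (W (Suc k) / W k) = (x + N ^ k)\<^sup>2" for k
    using W_pos[of k] W_pos[of "Suc k"] by (simp add: W_def add.commute)
  have exponents: "N ^ \<epsilon> (Suc k) * N ^ \<epsilon> k = (N ^ max m k)\<^sup>2" for k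
  proof -
    have "\<epsilon> (Suc k) + \<epsilon> k = 2 * max m k"
      unfolding \<epsilon>_def by (cases "k < m") (auto simp: max_def, presburger+)
    then show ?thesis by (metis power_add power_mult mult.commute)
  qed
  have lower: "N ^ \<epsilon> (Suc k) * N ^ \<epsilon> k \<le> (x + N ^ k)\<^sup>2" for k
    unfolding exponents x_def using power_sum_between_max(1)[OF assms(1)] assms(1)
    by (intro power_mono) auto
  have upper: "(x + N ^ k)\<^sup>2 \<le> 4 * (N ^ \<epsilon> (Suc k) * N ^ \<epsilon> k)" for k
  proof -
    have "(x + N ^ k)\<^sup>2 \<le> (2 * N ^ max m k)\<^sup>2"
      unfolding x_def using power_sum_between_max(2)[OF assms(1)] assms(1)
      by (intro power_mono) (auto intro: add_nonneg_nonneg)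
    then show ?thesis unfolding exponents by (simp add: power_mult_distrib)
  qed
  have "N ^ \<epsilon> n / 4 ^ n \<le> W (Suc n) / W n \<and> W (Suc n) / W n \<le> 4 ^ n * N ^ \<epsilon> n"
    using assms(1) W_pos
    by (intro reciprocal_recurrence_bounds[of "\<lambda>k. W (Suc k) / W k" "\<lambda>k. N ^ \<epsilon> k"
          "\<lambda>k. (x + N ^ k)\<^sup>2"] step lower upper) (auto simp: W_def x_def \<epsilon>_def)
  then show "N ^ e / 4 ^ n \<le> poly (alt_poly N (Suc n)) (N ^ m) / poly (alt_poly N n) (N ^ m)"
    and "poly (alt_poly N (Suc n)) (N ^ m) / poly (alt_poly N n) (N ^ m) \<le> 4 ^ n * N ^ e"
    by (simp_all add: W_def x_def \<epsilon>_def e_def)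
qed

lemma roots_between_sign_changes:
  fixes f :: "real poly" and t :: "nat \<Rightarrow> real"
  assumes "f \<noteq> 0" and "degree f = d"
    and t_step: "\<And>i. i < d \<Longrightarrow> t i < t (Suc i)"
    and sign_change: "\<And>i. i < d \<Longrightarrow> poly f (t i) * poly f (t (Suc i)) < 0"
  shows "card {x. poly f x = 0} = d" and "{x. poly f x = 0} \<subseteq> {t 0<..<t d}"
    and "\<And>x. poly f x = 0 \<Longrightarrow> order x f = 1"
proof -
  define Z where "Z = {x. poly f x = 0}"
  have t_mono: "t i \<le> t j" if "i \<le> j" "j \<le> d" for i j
    using that
    by (induction j rule: dec_induct) (auto simp: Suc_le_eq intro: order.trans less_imp_le t_step)
  have "\<forall>i. \<exists>x. i < d \<longrightarrow> t i < x \<and> x < t (Suc i) \<and> poly f x = 0"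
    using poly_IVT[OF t_step sign_change] by blast
  then obtain z where z: "\<And>i. i < d \<Longrightarrow> t i < z i \<and> z i < t (Suc i) \<and> poly f (z i) = 0"
    by metis
  have z_mono: "z i < z j" if "i < j" "j < d" for i j
    using z[of i] z[of j] t_mono[of "Suc i" j] that by fastforce
  then have "inj_on z {..<d}"
    by (metis inj_onI lessThan_iff linorder_neq_iff less_irrefl)
  then have card_z: "card (z ` {..<d}) = d" by (simp add: card_image)
  have "z ` {..<d} \<subseteq> Z" using z by (auto simp: Z_def)
  moreover have "finite Z" using assms(1) by (simp add: Z_def poly_roots_finite)
  moreover have "card Z \<le> d" using card_poly_roots_bound[OF assms(1)] assms(2) by (simp add: Z_def)
  ultimately have Z_eq: "Z = z ` {..<d}" using card_z by (metis card_seteq)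
  then show card_Z: "card {x. poly f x = 0} = d" using card_z by (simp add: Z_def)
  show "{x. poly f x = 0} \<subseteq> {t 0<..<t d}"
  proof
    fix x assume "x \<in> {x. poly f x = 0}"
    then obtain i where "i < d" "x = z i" using Z_eq by (auto simp: Z_def)
    then show "x \<in> {t 0<..<t d}"
      using z[of i] t_mono[of 0 i] t_mono[of "Suc i" d] by auto
  qed
  show "order x f = 1" if "poly f x = 0" for x
  proof (rule ccontr)
    assume "order x f \<noteq> 1"
    have pos: "0 < order y f" if "y \<in> Z" for y
      using that assms(1) by (simp add: Z_def order_gt_0_iff)
    have "x \<in> Z" using that by (simp add: Z_def)
    with pos \<open>order x f \<noteq> 1\<close> have "1 < order x f" by fastforce
    with pos \<open>x \<in> Z\<close> have "(\<Sum>y\<in>Z. 1) < (\<Sum>y\<in>Z. order y f)"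
      using \<open>finite Z\<close> by (intro sum_strict_mono_ex1) (auto simp: Suc_le_eq)
    also have "\<dots> = size (proots f)"
      using assms(1) by (simp add: size_multiset_overloaded_eq Z_def)
    also have "\<dots> \<le> d" using size_proots_le assms(2) by metis
    finally show False using card_Z by (simp add: Z_def)
  qed
qed

definition root_fits :: "real poly \<Rightarrow> real poly \<Rightarrow> root_label \<times> nat \<Rightarrow> real \<Rightarrow> bool" where
  "root_fits P Q s x \<longleftrightarrow>
     (poly P x = 0 \<longleftrightarrow> fst s = Lp) \<and> (poly Q x = 0 \<longleftrightarrow> fst s = Lq) \<and>
     (poly (P - Q) x = 0 \<longleftrightarrow> fst s = Lr) \<and> order x (label_poly P Q (fst s)) = snd s"

lemma realizableI:
  assumes "degree (P - Q) = d" and "sorted_wrt (<) xs"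
    and "set xs = {x. poly P x = 0 \<or> poly Q x = 0 \<or> poly (P - Q) x = 0}"
    and "list_all2 (root_fits P Q) S xs"
  shows "realizable S d"
  unfolding realizable_def using assms
  by (intro exI[of _ P] exI[of _ Q] exI[of _ xs]) (auto simp: root_fits_def list_all2_conv_all_nth)

lemma root_fits_LpI:
  assumes "P \<noteq> 0" "Q \<noteq> 0" "0 < k" "order x P = k" "order x Q = 0"
  shows "root_fits P Q (Lp, k) x"
proof -
  have "poly P x = 0" "poly Q x \<noteq> 0" using assms by (simp_all add: order_root)
  then show ?thesis using assms(4) by (auto simp: root_fits_def label_poly_def)
qed

lemma root_fits_LqI:
  assumes "P \<noteq> 0" "Q \<noteq> 0" "0 < k" "order x Q = k" "order x P = 0"
  shows "root_fits P Q (Lq, k) x"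
proof -
  have "poly Q x = 0" "poly P x \<noteq> 0" using assms by (simp_all add: order_root)
  then show ?thesis using assms(4) by (auto simp: root_fits_def label_poly_def)
qed

lemma root_fits_LrI:
  assumes "poly P x \<noteq> 0" "poly (P - Q) x = 0" "order x (P - Q) = k"
  shows "root_fits P Q (Lr, k) x"
  using assms by (auto simp: root_fits_def label_poly_def)

definition alternating_scheme :: "nat \<Rightarrow> root_scheme" where
  "alternating_scheme n =
     map (\<lambda>m. if even (n + m) then (Lp, 2) else (Lq, 2)) (rev [0..<n]) @
     [(if even n then Lq else Lp, 1)] @ replicate (Suc n) (Lr, 1) @ [(Lp, 1)]"

lemma map_parity_rev_upt:
  "map (\<lambda>m. if even (n + m) then a else b) (rev [0..<2 * k])
     = concat (replicate k (if even n then [b, a] else [a, b]))"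
  by (induction k) auto

lemma Cons_concat_replicate_pair:
  "x # concat (replicate k [y, x]) = concat (replicate k [x, y]) @ [x]"
  by (induction k) auto

lemma alternating_scheme_even:
  "alternating_scheme (2 * k) =
     concat (replicate k [(Lq, 2), (Lp, 2)]) @ [(Lq, 1)] @ replicate (2 * k + 1) (Lr, 1) @ [(Lp, 1)]"
  using map_parity_rev_upt[of "2 * k" "(Lp, 2)" "(Lq, 2)" k] by (simp add: alternating_scheme_def)

lemma alternating_scheme_odd:
  "alternating_scheme (2 * k + 1) =
     concat (replicate k [(Lq, 2), (Lp, 2)]) @ [(Lq, 2), (Lp, 1)] @
     replicate (2 * k + 2) (Lr, 1) @ [(Lp, 1)]"
  using map_parity_rev_upt[of "2 * k + 1" "(Lp, 2::nat)" "(Lq, 2)" k]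
    Cons_concat_replicate_pair[of "(Lq, 2::nat)" k "(Lp, 2)"]
  by (simp add: alternating_scheme_def)

locale alternating_realization =
  fixes n :: nat and K N :: real
  assumes K_gt: "4 ^ n < K" and N_ge: "2 * K * 4 ^ n \<le> N"
begin

(* For n = 0 the truncated subtraction gives b = 2, and the construction still works. *)
definition b :: real where "b = 2 * N ^ (n - 1)"

definition P :: "real poly" where "P = smult (- K) ([:- b, 1:] * alt_poly N n)"

definition Q :: "real poly" where "Q = alt_poly N (Suc n)"

lemma K_pos: "0 < K"
  using K_gt zero_less_power[of "4::real" n] by linarith

lemma N_gt_1: "1 < N"
proof -
  have "1 < K" using K_gt one_le_power[of "4::real" n] by linarith
  moreover have "2 * K \<le> 2 * K * 4 ^ n" using K_pos by simp
  ultimately show ?thesis using N_ge by linarith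
qed

lemma b_pos: "0 < b"
  using N_gt_1 by (simp add: b_def)

lemma poly_P: "poly P x = K * (b - x) * poly (alt_poly N n) x"
  by (simp add: P_def algebra_simps)

lemma P_nonzero: "P \<noteq> 0"
  using K_pos by (simp add: P_def del: mult_pCons_left)

lemma Q_nonzero: "Q \<noteq> 0"
  by (simp add: Q_def)

lemma order_P: "order x P = (if x = b then 1 else 0) + order x (alt_poly N n)"
  using K_pos order_linear_factor_power[of x "- b" 1]
  by (simp add: P_def order_smult order_mult del: mult_pCons_left)

lemma degree_P_minus_Q: "degree (P - Q) = Suc n"
proof (rule antisym)
  have deg: "degree ([:- b, 1:] * alt_poly N n) = Suc n"
    by (simp add: degree_mult_eq del: mult_pCons_left)
  then have "degree P = Suc n" using K_pos by (simp add: P_def)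
  moreover have "degree Q = Suc n" by (simp add: Q_def)
  ultimately show "degree (P - Q) \<le> Suc n" by (metis degree_diff_le order_refl)
  have "coeff P (Suc n) = - K * lead_coeff ([:- b, 1:] * alt_poly N n)"
    by (simp only: P_def coeff_smult deg[symmetric])
  then have "coeff P (Suc n) = - K"
    using lead_coeff_alt_poly[of N n] by (simp add: lead_coeff_mult del: mult_pCons_left)
  moreover have "coeff Q (Suc n) = 1"
    using lead_coeff_alt_poly[of N "Suc n"] by (simp add: Q_def)
  ultimately have "coeff (P - Q) (Suc n) \<noteq> 0" using K_pos by simp
  then show "Suc n \<le> degree (P - Q)" by (rule le_degree)
qed

lemma sign_at_power:
  assumes "m < n"
  shows "if even (n + m) then poly (P - Q) (N ^ m) < 0 else 0 < poly (P - Q) (N ^ m)"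
proof -
  define x where "x = N ^ m"
  define w where "w = poly (alt_poly N n) x"
  define \<rho> where "\<rho> = poly Q x / w"
  have x_pos: "0 < x" using N_gt_1 by (simp add: x_def)
  have w_pos: "0 < w" using N_gt_1 x_pos unfolding w_def by (intro alt_poly_pos) auto
  have f_eq: "poly (P - Q) x = w * (K * (b - x) - \<rho>)"
    using w_pos by (simp add: poly_P \<rho>_def w_def field_simps)
  have "m \<le> n - 1" using assms by simp
  have N_power: "N ^ n = N * N ^ (n - 1)"
    using assms by (metis Suc_pred' gr_implies_not0 neq0_conv power_Suc)
  show ?thesis
  proof (cases "even (n + m)")
    case True
    then have "N ^ n / 4 ^ n \<le> \<rho>"
      using alt_poly_ratio_bounds(1)[where N = N and m = m and n = n] N_gt_1 assms
      by (simp add: \<rho>_def w_def x_def Q_def max_def)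
    moreover have "K * (b - x) < N ^ n / 4 ^ n"
    proof -
      have "K * (b - x) < K * b" using K_pos x_pos by simp
      also have "\<dots> = (2 * K * 4 ^ n) * N ^ (n - 1) / 4 ^ n" by (simp add: b_def)
      also have "\<dots> \<le> N * N ^ (n - 1) / 4 ^ n"
        using N_ge N_gt_1 by (intro divide_right_mono mult_right_mono) auto
      finally show ?thesis by (simp add: N_power)
    qed
    ultimately have "poly (P - Q) x < 0" unfolding f_eq using w_pos by (simp add: mult_pos_neg)
    then show ?thesis using True by (simp add: x_def)
  next
    case False
    then have "\<rho> \<le> 4 ^ n * N ^ (n - 1)"
      using alt_poly_ratio_bounds(2)[where N = N and m = m and n = n] N_gt_1 \<open>m \<le> n - 1\<close>
      by (simp add: \<rho>_def w_def x_def Q_def max_def)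
    moreover have "4 ^ n * N ^ (n - 1) < K * (b - x)"
    proof -
      have "x \<le> N ^ (n - 1)"
        using N_gt_1 \<open>m \<le> n - 1\<close> unfolding x_def by (intro power_increasing) auto
      then have "N ^ (n - 1) \<le> b - x" by (simp add: b_def)
      have "4 ^ n * N ^ (n - 1) < K * N ^ (n - 1)"
        using K_gt N_gt_1 by simp
      also have "\<dots> \<le> K * (b - x)"
        using K_pos \<open>N ^ (n - 1) \<le> b - x\<close> by simp
      finally show ?thesis .
    qed
    ultimately have "0 < poly (P - Q) x" unfolding f_eq using w_pos by simp
    then show ?thesis using False by (simp add: x_def)
  qed
qed

definition test_point :: "nat \<Rightarrow> real" where
  "test_point j = (if j = 0 then 0 else if j \<le> n then N ^ (j - 1) else b)"

lemma test_point_step: "j \<le> n \<Longrightarrow> test_point j < test_point (Suc j)"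
  using N_gt_1 by (cases "j = n") (auto simp: test_point_def b_def power_strict_increasing)

lemma sign_at_test_point:
  assumes "j \<le> Suc n"
  shows "if even (n + j) then 0 < poly (P - Q) (test_point j) else poly (P - Q) (test_point j) < 0"
proof -
  consider "j = 0" | m where "j = Suc m" "m < n" | "j = Suc n"
    using assms by (metis not0_implies_Suc le_SucE less_Suc_eq_le Suc_le_mono le_neq_implies_less)
  then show ?thesis
  proof cases
    case 1
    have "0 < poly (alt_poly N k) 0" if "even k" for k
      using that N_gt_1 by (intro alt_poly_pos) auto
    moreover have "poly (alt_poly N k) 0 = 0" if "odd k" for k
      using that by (simp add: alt_poly_root_iff)
    ultimately show ?thesis
      using 1 K_pos b_pos by (simp add: test_point_def poly_P Q_def)
  next
    case 2
    then show ?thesis using sign_at_power[of m] by (cases "even (n + m)") (auto simp: test_point_def)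
  next
    case 3
    have "0 < poly Q b" using N_gt_1 b_pos unfolding Q_def by (intro alt_poly_pos) auto
    then show ?thesis using 3 by (simp add: test_point_def poly_P)
  qed
qed

lemma
  shows card_roots_P_minus_Q: "card {x. poly (P - Q) x = 0} = Suc n"
    and roots_P_minus_Q_between: "{x. poly (P - Q) x = 0} \<subseteq> {0<..<b}"
    and order_roots_P_minus_Q: "poly (P - Q) x = 0 \<Longrightarrow> order x (P - Q) = 1"
proof -
  have "P - Q \<noteq> 0" using degree_P_minus_Q by auto
  moreover have "poly (P - Q) (test_point i) * poly (P - Q) (test_point (Suc i)) < 0"
    if "i < Suc n" for i
    using sign_at_test_point[of i] sign_at_test_point[of "Suc i"] that
    by (auto simp: mult_pos_neg mult_neg_pos split: if_splits)
  moreover have "test_point 0 = 0" "test_point (Suc n) = b" by (simp_all add: test_point_def)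
  ultimately show "card {x. poly (P - Q) x = 0} = Suc n" "{x. poly (P - Q) x = 0} \<subseteq> {0<..<b}"
    "poly (P - Q) x = 0 \<Longrightarrow> order x (P - Q) = 1"
    using roots_between_sign_changes[OF _ degree_P_minus_Q, of test_point] test_point_step by auto
qed

lemma root_fits_neg_power:
  assumes "m < n"
  shows "root_fits P Q (if even (n + m) then (Lp, 2) else (Lq, 2)) (- (N ^ m))"
proof -
  have "0 < N ^ m" using N_gt_1 by simp
  then have "- (N ^ m) \<noteq> b" using b_pos by linarith
  then have "order (- (N ^ m)) P = (if even (n + m) then 2 else 0)"
    and "order (- (N ^ m)) Q = (if even (n + m) then 0 else 2)"
    using assms N_gt_1 by (simp_all add: order_P Q_def order_alt_poly_neg_power)
  then show ?thesis
    using P_nonzero Q_nonzero by (auto intro: root_fits_LpI root_fits_LqI)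
qed

lemma root_fits_zero: "root_fits P Q (if even n then (Lq, 1) else (Lp, 1)) 0"
proof -
  have "order 0 P = (if even n then 0 else 1)" and "order 0 Q = (if even n then 1 else 0)"
    using b_pos N_gt_1 by (simp_all add: order_P Q_def order_alt_poly_0)
  then show ?thesis
    using P_nonzero Q_nonzero by (auto intro: root_fits_LpI root_fits_LqI)
qed

lemma root_fits_b: "root_fits P Q (Lp, 1) b"
proof (rule root_fits_LpI[OF P_nonzero Q_nonzero])
  have "poly (alt_poly N k) b \<noteq> 0" for k
    using alt_poly_pos[of N b k] N_gt_1 b_pos by fastforce
  then show "order b P = 1" "order b Q = 0"
    by (simp_all add: order_P Q_def order_0I)
qed simp

lemma root_fits_P_minus_Q_root:
  assumes "poly (P - Q) z = 0"
  shows "root_fits P Q (Lr, 1) z"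
proof (rule root_fits_LrI[OF _ assms order_roots_P_minus_Q[OF assms]])
  have "0 < z" "z < b" using assms roots_P_minus_Q_between by auto
  moreover have "0 < poly (alt_poly N n) z" using N_gt_1 \<open>0 < z\<close> by (intro alt_poly_pos) auto
  ultimately show "poly P z \<noteq> 0" using K_pos by (simp add: poly_P)
qed

lemma roots_of_P_or_Q:
  "{x. poly P x = 0 \<or> poly Q x = 0} = insert 0 (insert b ((\<lambda>m. - (N ^ m)) ` {..<n}))"
proof -
  have "(\<exists>j<Suc n. even (Suc n + j) \<and> x = - (N ^ j)) \<longleftrightarrow> (\<exists>j<n. odd (n + j) \<and> x = - (N ^ j))"
    for x by (auto simp: less_Suc_eq)
  then show ?thesis using K_pos by (auto simp: poly_P Q_def alt_poly_root_iff)
qed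

lemma realizes_alternating_scheme: "realizable (alternating_scheme n) (Suc n)"
proof -
  define negs where "negs = map (\<lambda>m. - (N ^ m)) (rev [0..<n])"
  define zs where "zs = sorted_list_of_set {x. poly (P - Q) x = 0}"
  have "finite {x. poly (P - Q) x = 0}" using degree_P_minus_Q by (intro poly_roots_finite) auto
  then have zs: "set zs = {x. poly (P - Q) x = 0}" "sorted_wrt (<) zs" "length zs = Suc n"
    using card_roots_P_minus_Q by (simp_all add: zs_def)
  have "sorted_wrt (\<lambda>i j. N ^ i < N ^ j) [0..<n]"
    using N_gt_1 by (intro sorted_wrt_mono_rel[OF _ sorted_wrt_upt]) simp
  then have "sorted_wrt (<) negs" by (simp add: negs_def sorted_wrt_map sorted_wrt_rev)
  moreover have "x < 0" if "x \<in> set negs" for x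
    using that N_gt_1 by (auto simp: negs_def)
  moreover have "0 < z \<and> z < b" if "z \<in> set zs" for z
    using that zs(1) roots_P_minus_Q_between by auto
  ultimately have sorted: "sorted_wrt (<) (negs @ [0] @ zs @ [b])"
    using zs(2) b_pos by (fastforce simp: sorted_wrt_append)
  have roots:
    "set (negs @ [0] @ zs @ [b]) = {x. poly P x = 0 \<or> poly Q x = 0 \<or> poly (P - Q) x = 0}"
    using roots_of_P_or_Q zs(1) by (auto simp: negs_def)
  have "list_all2 (root_fits P Q)
          (map (\<lambda>m. if even (n + m) then (Lp, 2) else (Lq, 2)) (rev [0..<n])) negs"
    unfolding negs_def list_all2_map1 list_all2_map2 list_all2_same using root_fits_neg_power by simp
  moreover have "list_all2 (root_fits P Q) (replicate (Suc n) (Lr, 1)) zs"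
    unfolding zs(3)[symmetric] map_replicate_const[symmetric] list_all2_map1 list_all2_same
    using root_fits_P_minus_Q_root zs(1) by simp
  ultimately have "list_all2 (root_fits P Q) (alternating_scheme n) (negs @ [0] @ zs @ [b])"
    unfolding alternating_scheme_def using root_fits_zero root_fits_b
    by (intro list_all2_appendI) (simp_all split: if_split_asm)
  with degree_P_minus_Q sorted roots show ?thesis by (rule realizableI)
qed

end

lemma realizable_alternating_scheme: "realizable (alternating_scheme n) (Suc n)"
proof -
  interpret alternating_realization n "2 * 4 ^ n" "4 * 4 ^ n * 4 ^ n"
    by unfold_locales auto
  show ?thesis by (rule realizes_alternating_scheme)
qed

theorem proposition3p2:
  shows "(\<forall>k::nat. k > 0 \<longrightarrow>
            realizable (concat (replicate k [(Lq, 2), (Lp, 2)]) @ [(Lq, 1)] @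
                        replicate (2 * k + 1) (Lr, 1) @ [(Lp, 1)]) (2 * k + 1)) \<and>
         (\<forall>k::nat.
            realizable (concat (replicate k [(Lq, 2), (Lp, 2)]) @ [(Lq, 2), (Lp, 1)] @
                        replicate (2 * k + 2) (Lr, 1) @ [(Lp, 1)]) (2 * k + 2))"
proof (intro conjI allI impI)
  fix k :: nat
  show "realizable (concat (replicate k [(Lq, 2), (Lp, 2)]) @ [(Lq, 1)] @
                    replicate (2 * k + 1) (Lr, 1) @ [(Lp, 1)]) (2 * k + 1)"
    using realizable_alternating_scheme[of "2 * k"] unfolding alternating_scheme_even by simp
  show "realizable (concat (replicate k [(Lq, 2), (Lp, 2)]) @ [(Lq, 2), (Lp, 1)] @
                    replicate (2 * k + 2) (Lr, 1) @ [(Lp, 1)]) (2 * k + 2)"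
    using realizable_alternating_scheme[of "2 * k + 1"] unfolding alternating_scheme_odd by simp
qed

end
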